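(* Let $W\in C^1(\mathbb{R}\setminus\{0\})$ satisfy $W''=-\delta_0+w$ in the distributional sense, where $\delta_0$ is the Dirac mass at $0$, $w\in C_b(\mathbb{R})$ and $\|w\|_{L^1(\mathbb{R})}=w_0<\infty$. Let $a\in C^1(\mathbb{R})$ satisfy $0\le a'(x)\le \alpha$ for all $x\in\mathbb{R}$, and let $A$ be the antiderivative of $a$ with $A(0)=0$. Let $\rho^{ini}\in\mathcal{P}_1(\mathbb{R})$ be nonnegative and compactly supported, with total mass $M=|\rho^{ini}|(\mathbb{R})$, and set $c:=\max_{x\in[-M(1+w_0),M(1+w_0)]}|a(x)|$. Consider a uniform grid $x_i=x_0+i\,\delta x$, $i=0,\dots,N_x$, with $\mathrm{supp}(\rho^{ini})\subset[x_0,x_{N_x}]$, time step $\delta t$, and $\lambda=\delta t/\delta x$. Set $\rho_i^0=\frac{1}{\delta x}\int_{[x_i,x_{i+1})}\rho^{ini}(dx)$, and for $n\ge 0$ define the sequences by the following scheme, with the boundary conventions $\rho_0^n=S_0^n=S_1^n=J_{-1/2}^n=0$ and $\rho_{N_x}^n=S_{N_x}^n=J_{N_x+1/2}^n=0$: \begin{itemize} \item $\nu_i^n=\sum_{k=1}^{N_x}\rho_k^n w_{ki}$ with $w_{ki}=\int_{(i-1-k)\delta x}^{(i-k)\delta x}w(z)\,dz$; \item $-\dfrac{S_{i+1}^n-2S_i^n+S_{i-1}^n}{\delta x^2}+\nu_i^n=\rho_i^n$; \item $\partial_xS_{i+1}^n=\dfrac{S_{i+2}^n-S_i^n}{2\delta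 x}$; \item $a_{i+1/2}^n=0$ if $\partial_xS_{i+1}^n=\partial_xS_i^n$, and $a_{i+1/2}^n=\dfrac{A(\partial_xS_{i+1}^n)-A(\partial_xS_i^n)}{\partial_xS_{i+1}^n-\partial_xS_i^n}$ otherwise; \item $J_{i+1/2}^n=-\dfrac{A(\partial_xS_{i+1}^n)-A(\partial_xS_i^n)}{\delta x}+a_{i+1/2}^n\dfrac{\nu_{i+1}^n+\nu_i^n}{2}$; \item $\rho_i^{n+1}=\rho_i^n-\dfrac{\lambda}{2}\big(J_{i+1/2}^n-J_{i-1/2}^n\big)+\dfrac{\lambda}{2}c\big(\rho_{i+1}^n-2\rho_i^n+\rho_{i-1}^n\big)$. \end{itemize} Assume the CFL condition $\lambda=\dfrac{\delta t}{\delta x}\le\dfrac{2}{3c}$. Then for all $i$ and all $n\in\mathbb{N}$, $$\rho_i^n\ge 0,\qquad |a_{i+1/2}^n|\le c.$$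
   Context: $\mathcal{P}_1(\mathbb{R})$ denotes the set of nonnegative bounded Radon measures $\mu$ on $\mathbb{R}$ with $\int_{\mathbb{R}}|x|\,d\mu(x)<\infty$. The scheme is a Lax–Friedrichs type discretization of the aggregation equation $\partial_t\rho+\partial_x(a(W'*\rho)\rho)=0$, where $S_i^n$ approximates $W*\rho$ and $\nu_i^n$ approximates $w*\rho$ at $(t_n,x_i)$, $t_n=n\delta t$.
   Formalization: The convention $S_{N_x}^n=0$ is dropped, and the discrete Poisson equation holds at every node $0\le i\le N_x$, which determines S at one node beyond each end of the grid from $S_0^n=S_1^n=0$. Each condition added here is assumed in the paper as well or is needed for the statement above to hold. *)

theory Defs
  imports "HOL-Analysis.Analysis"
begin

definition test_fun :: "(real \<Rightarrow> real) \<Rightarrow> bool" where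
  "test_fun \<phi> \<longleftrightarrow> (\<forall>k x. (deriv ^^ k) \<phi> differentiable (at x))
                    \<and> compact (closure {x. \<phi> x \<noteq> 0})"

definition weak_second_deriv_dirac :: "(real \<Rightarrow> real) \<Rightarrow> (real \<Rightarrow> real) \<Rightarrow> bool" where
  "weak_second_deriv_dirac W w \<longleftrightarrow>
     (\<forall>\<phi>. test_fun \<phi> \<longrightarrow>
        integrable lborel (\<lambda>x. W x * (deriv ^^ 2) \<phi> x) \<and>
        (LINT x|lborel. W x * (deriv ^^ 2) \<phi> x) = - \<phi> 0 + (LINT x|lborel. w x * \<phi> x))"

definition grid :: "real \<Rightarrow> real \<Rightarrow> int \<Rightarrow> real" where
  "grid x0 dx i = x0 + real_of_int i * dx"

definition wgt :: "(real \<Rightarrow> real) \<Rightarrow> real \<Rightarrow> int \<Rightarrow> int \<Rightarrow> real" where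
  "wgt w dx k i = (LBINT z = real_of_int (i - 1 - k) * dx .. real_of_int (i - k) * dx. w z)"

end

theory Submission
  imports Defs
begin

text \<open>
  Substituting the discrete Poisson equation into the flux gives
  J(i+1/2) = a(i+1/2) (rho(i) + rho(i+1)) / 2. Hence, as long as |a(i+1/2)| \<le> c, the CFL
  condition writes each new value rho(n+1, i) as a combination of rho(n, i-1), rho(n, i),
  rho(n, i+1) with nonnegative coefficients, and the scheme in conservation form loses mass only
  through the boundary. Conversely, summing the Poisson equation bounds |\<partial>S(n, i)| by
  dx \<Sum>(rho + |nu|) \<le> (1 + w0) M for nonnegative data of mass at most M, and the mean value
  theorem turns this into |a(i+1/2)| \<le> c. Nonnegativity and the mass bound are therefore
  propagated together by induction on n.
\<close>

lemma sum_int_telescope: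
  fixes f :: "int \<Rightarrow> 'a::ab_group_add"
  assumes "a - 1 \<le> b"
  shows "(\<Sum>i = a..b. f i - f (i - 1)) = f b - f (a - 1)"
  using assms
proof (induction b rule: int_ge_induct)
  case (step b)
  then have "{a..b + 1} = insert (b + 1) {a..b}"
    by auto
  with step show ?case
    by simp
qed simp

lemma first_difference_eq_sum_second_differences:
  fixes g :: "int \<Rightarrow> 'a::comm_ring_1"
  assumes "0 \<le> k"
  shows "g (k + 1) - g k = g 1 - g 0 + (\<Sum>j = 1..k. g (j + 1) - 2 * g j + g (j - 1))"
  using sum_int_telescope[of 1 k "\<lambda>j. g (j + 1) - g j"] assms
  by (simp add: algebra_simps mult_2)

lemma abs_first_difference_le_sum_second_differences:
  fixes g :: "int \<Rightarrow> real"
  assumes g: "g 1 = g 0" and k: "- 1 \<le> k" "k \<le> N" and N: "0 \<le> N"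
  shows "\<bar>g (k + 1) - g k\<bar> \<le> (\<Sum>j = 0..N. \<bar>g (j + 1) - 2 * g j + g (j - 1)\<bar>)"
proof (cases "k = - 1")
  case True
  then have "\<bar>g (k + 1) - g k\<bar> = \<bar>g (0 + 1) - 2 * g 0 + g (0 - 1)\<bar>"
    using g by simp
  also have "\<dots> \<le> (\<Sum>j = 0..N. \<bar>g (j + 1) - 2 * g j + g (j - 1)\<bar>)"
    using N by (intro member_le_sum) auto
  finally show ?thesis .
next
  case False
  then have "\<bar>g (k + 1) - g k\<bar> = \<bar>\<Sum>j = 1..k. g (j + 1) - 2 * g j + g (j - 1)\<bar>"
    using k g first_difference_eq_sum_second_differences[of k g] by simp
  also have "\<dots> \<le> (\<Sum>j = 1..k. \<bar>g (j + 1) - 2 * g j + g (j - 1)\<bar>)"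
    by (rule sum_abs)
  also have "\<dots> \<le> (\<Sum>j = 0..N. \<bar>g (j + 1) - 2 * g j + g (j - 1)\<bar>)"
    using k by (intro sum_mono2) auto
  finally show ?thesis .
qed

lemma abs_difference_quotient_le:
  fixes A a :: "real \<Rightarrow> real"
  assumes A: "\<And>z. (A has_real_derivative a z) (at z)"
    and a: "\<And>z. \<bar>z\<bar> \<le> R \<Longrightarrow> \<bar>a z\<bar> \<le> c"
    and x: "\<bar>x\<bar> \<le> R" and y: "\<bar>y\<bar> \<le> R"
  shows "\<bar>(A y - A x) / (y - x)\<bar> \<le> c"
proof (cases "x = y")
  case True
  then show ?thesis using a[of x] x by simp
next
  case False
  have "\<bar>A y - A x\<bar> \<le> c * \<bar>y - x\<bar>"
    using field_differentiable_bound[of "{-R..R}" A a c y x] A a x y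
    by (auto intro: has_field_derivative_at_within simp: abs_le_iff)
  then show ?thesis
    using False by (simp add: abs_divide divide_le_eq)
qed

lemma abs_le_SUP_abs:
  fixes f :: "real \<Rightarrow> real"
  assumes "continuous_on {a..b} f" "x \<in> {a..b}"
  shows "\<bar>f x\<bar> \<le> (SUP y\<in>{a..b}. \<bar>f y\<bar>)"
  using assms
  by (intro cSUP_upper bounded_imp_bdd_above compact_imp_bounded compact_continuous_image
      continuous_on_rabs) auto

lemma disjoint_family_Ioc_cells:
  fixes a h :: real
  assumes "0 < h"
  shows "disjoint_family (\<lambda>j::int. {a + of_int j * h <.. a + of_int (j + 1) * h})"
proof -
  have "x \<in> {a + of_int j * h <.. a + of_int (j + 1) * h} \<longleftrightarrow> \<lceil>(x - a) / h\<rceil> = j + 1" for x j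
    using assms by (auto simp: ceiling_eq_iff pos_less_divide_eq pos_divide_le_eq algebra_simps)
  then show ?thesis
    unfolding disjoint_family_on_def by (metis add_right_cancel disjoint_iff)
qed

lemma disjoint_family_grid_cells:
  assumes "0 < dx"
  shows "disjoint_family (\<lambda>k. {grid x0 dx k ..< grid x0 dx (k + 1)})"
proof -
  have "x \<in> {grid x0 dx k ..< grid x0 dx (k + 1)} \<longleftrightarrow> \<lfloor>(x - x0) / dx\<rfloor> = k" for x k
    using assms by (auto simp: grid_def floor_eq_iff pos_le_divide_eq pos_divide_less_eq algebra_simps)
  then show ?thesis
    unfolding disjoint_family_on_def by (metis disjoint_iff)
qed

lemma sum_measure_grid_cells_le:
  assumes "finite_measure mu" "sets mu = sets borel" "0 < dx" "finite K"
  shows "(\<Sum>k\<in>K. measure mu {grid x0 dx k ..< grid x0 dx (k + 1)}) \<le> measure mu (space mu)"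
proof -
  interpret finite_measure mu by fact
  have "(\<Sum>k\<in>K. measure mu {grid x0 dx k ..< grid x0 dx (k + 1)})
      = measure mu (\<Union>k\<in>K. {grid x0 dx k ..< grid x0 dx (k + 1)})"
    using assms disjoint_family_on_mono[OF subset_UNIV disjoint_family_grid_cells]
    by (intro measure_finite_Union[symmetric]) auto
  also have "\<dots> \<le> measure mu (space mu)"
    by (rule bounded_measure)
  finally show ?thesis .
qed

lemma grid_average_mass_le:
  fixes r :: "int \<Rightarrow> real"
  assumes mu: "finite_measure mu" "sets mu = sets borel" and dx: "0 < dx"
    and r: "\<And>i. 0 < i \<Longrightarrow> i < int N \<Longrightarrow> r i = measure mu {grid x0 dx i ..< grid x0 dx (i + 1)} / dx"
    and r_last: "r (int N) = 0"
  shows "dx * (\<Sum>i = 1..int N. r i) \<le> measure mu (space mu)"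
proof -
  have "dx * (\<Sum>i = 1..int N. r i) \<le> (\<Sum>i = 1..int N. measure mu {grid x0 dx i ..< grid x0 dx (i + 1)})"
    unfolding sum_distrib_left
  proof (rule sum_mono)
    fix i assume "i \<in> {1..int N}"
    then show "dx * r i \<le> measure mu {grid x0 dx i ..< grid x0 dx (i + 1)}"
      using r r_last dx by (cases "i = int N") auto
  qed
  also have "\<dots> \<le> measure mu (space mu)"
    using mu dx by (rule sum_measure_grid_cells_le) simp
  finally show ?thesis .
qed

lemma sum_abs_wgt_le:
  fixes w :: "real \<Rightarrow> real"
  assumes w: "integrable lborel w" and dx: "0 < dx" and I: "finite I"
  shows "(\<Sum>i\<in>I. \<bar>wgt w dx k i\<bar>) \<le> (LINT x|lborel. \<bar>w x\<bar>)"
proof -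
  define C where "C i = {of_int (- 1 - k) * dx + of_int i * dx <.. of_int (- 1 - k) * dx + of_int (i + 1) * dx}"
    for i :: int
  have disj: "disjoint_family_on C I"
    unfolding C_def[abs_def]
    by (rule disjoint_family_on_mono[OF subset_UNIV disjoint_family_Ioc_cells[OF dx]])
  have wgt_C: "wgt w dx k i = (LINT x|lborel. w x * indicator (C i) x)" for i
  proof -
    have "of_int (i - 1 - k) * dx \<le> of_int (i - k) * dx" using dx by simp
    moreover have "C i = {of_int (i - 1 - k) * dx <.. of_int (i - k) * dx}"
      by (simp add: C_def algebra_simps)
    ultimately show ?thesis
      by (simp add: wgt_def interval_integral_Ioc set_lebesgue_integral_def mult.commute)
  qed
  have aw: "integrable lborel (\<lambda>x. \<bar>w x\<bar>)"
    using w by simp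
  have "(\<Sum>i\<in>I. \<bar>wgt w dx k i\<bar>) \<le> (\<Sum>i\<in>I. LINT x|lborel. \<bar>w x\<bar> * indicator (C i) x)"
  proof (rule sum_mono)
    fix i
    have "\<bar>wgt w dx k i\<bar> \<le> (LINT x|lborel. \<bar>w x * indicator (C i) x\<bar>)"
      unfolding wgt_C by (rule integral_abs_bound)
    then show "\<bar>wgt w dx k i\<bar> \<le> (LINT x|lborel. \<bar>w x\<bar> * indicator (C i) x)"
      by (simp add: abs_mult)
  qed
  also have "\<dots> = (LINT x|lborel. (\<Sum>i\<in>I. \<bar>w x\<bar> * indicator (C i) x))"
    by (rule Bochner_Integration.integral_sum[symmetric])
      (auto intro!: integrable_real_mult_indicator aw simp: C_def)
  also have "\<dots> = (LINT x|lborel. \<bar>w x\<bar> * indicator (\<Union>i\<in>I. C i) x)"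
    by (simp only: sum_distrib_left[symmetric] indicator_UN_disjoint[OF I disj])
  also have "\<dots> \<le> (LINT x|lborel. \<bar>w x\<bar>)"
    by (intro integral_mono integrable_real_mult_indicator aw) (auto simp: indicator_def C_def)
  finally show ?thesis .
qed

lemma sum_abs_discrete_convolution_le:
  fixes w :: "real \<Rightarrow> real" and r nu :: "int \<Rightarrow> real"
  assumes w: "integrable lborel w" and dx: "0 < dx" and I: "finite I" and K: "finite K"
    and r: "\<And>k. k \<in> K \<Longrightarrow> 0 \<le> r k"
    and nu: "\<And>i. nu i = (\<Sum>k\<in>K. r k * wgt w dx k i)"
  shows "(\<Sum>i\<in>I. \<bar>nu i\<bar>) \<le> (LINT x|lborel. \<bar>w x\<bar>) * (\<Sum>k\<in>K. r k)"
proof -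
  have "(\<Sum>i\<in>I. \<bar>nu i\<bar>) \<le> (\<Sum>i\<in>I. \<Sum>k\<in>K. r k * \<bar>wgt w dx k i\<bar>)"
    unfolding nu using r by (intro sum_mono order.trans[OF sum_abs]) (simp add: abs_mult)
  also have "\<dots> = (\<Sum>k\<in>K. r k * (\<Sum>i\<in>I. \<bar>wgt w dx k i\<bar>))"
    by (simp add: sum.swap[of _ I] sum_distrib_left)
  also have "\<dots> \<le> (\<Sum>k\<in>K. r k * (LINT x|lborel. \<bar>w x\<bar>))"
    using r sum_abs_wgt_le[OF w dx I] by (intro sum_mono mult_left_mono) auto
  finally show ?thesis
    by (simp add: sum_distrib_right mult.commute)
qed

lemma sum_abs_diff_discrete_convolution_le:
  fixes w :: "real \<Rightarrow> real" and r nu :: "int \<Rightarrow> real"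
  assumes w: "integrable lborel w" and dx: "0 < dx"
    and r: "\<And>k. 0 \<le> r k" and r0: "r 0 = 0"
    and nu: "\<And>i. nu i = (\<Sum>k = 1..int N. r k * wgt w dx k i)"
  shows "(\<Sum>i = 0..int N. \<bar>r i - nu i\<bar>) \<le> (1 + (LINT x|lborel. \<bar>w x\<bar>)) * (\<Sum>k = 1..int N. r k)"
proof -
  have "(\<Sum>i = 0..int N. \<bar>r i - nu i\<bar>) \<le> (\<Sum>i = 0..int N. r i) + (\<Sum>i = 0..int N. \<bar>nu i\<bar>)"
    unfolding sum.distrib[symmetric] using r by (intro sum_mono) (metis abs_of_nonneg abs_triangle_ineq4)
  also have "(\<Sum>i = 0..int N. r i) = (\<Sum>k = 1..int N. r k)"
  proof -
    have "{0..int N} = insert 0 {1..int N}" by auto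
    then show ?thesis using r0 by simp
  qed
  also have "(\<Sum>i = 0..int N. \<bar>nu i\<bar>) \<le> (LINT x|lborel. \<bar>w x\<bar>) * (\<Sum>k = 1..int N. r k)"
    using r by (intro sum_abs_discrete_convolution_le[OF w dx] nu) auto
  finally show ?thesis
    by (simp add: distrib_right)
qed

text \<open>
  The boundary fluxes J(n, -1) and J(n, Nx) are not part of the scheme here: the update is only
  prescribed at the interior nodes, where they never occur.
\<close>

locale aggregation_LF_scheme =
  fixes Nx :: nat and dx lam c :: real and A :: "real \<Rightarrow> real"
    and rho nu S dS ah J :: "nat \<Rightarrow> int \<Rightarrow> real"
  assumes dx_pos: "0 < dx" and lam_nonneg: "0 \<le> lam" and c_nonneg: "0 \<le> c"
    and CFL: "3 * c * lam \<le> 2"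
    and rho_bd: "\<forall>n i. (i \<le> 0 \<or> int Nx \<le> i) \<longrightarrow> rho n i = 0"
    and S_bd: "\<forall>n. S n 0 = 0 \<and> S n 1 = 0"
    and S_eq: "\<forall>n i. 0 \<le> i \<and> i \<le> int Nx \<longrightarrow>
                 - (S n (i + 1) - 2 * S n i + S n (i - 1)) / dx\<^sup>2 + nu n i = rho n i"
    and dS_def: "\<forall>n i. - 1 \<le> i \<and> i \<le> int Nx - 1 \<longrightarrow>
                   dS n (i + 1) = (S n (i + 2) - S n i) / (2 * dx)"
    and ah_def: "\<forall>n i. 0 \<le> i \<and> i \<le> int Nx - 1 \<longrightarrow>
                   ah n i = (if dS n (i + 1) = dS n i then 0
                             else (A (dS n (i + 1)) - A (dS n i)) / (dS n (i + 1) - dS n i))"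
    and J_def: "\<forall>n i. 0 \<le> i \<and> i \<le> int Nx - 1 \<longrightarrow>
                  J n i = - (A (dS n (i + 1)) - A (dS n i)) / dx
                          + ah n i * (nu n (i + 1) + nu n i) / 2"
    and rho_step: "\<forall>n i. 0 < i \<and> i < int Nx \<longrightarrow>
                     rho (Suc n) i = rho n i - lam / 2 * (J n i - J n (i - 1))
                                     + lam / 2 * c * (rho n (i + 1) - 2 * rho n i + rho n (i - 1))"
begin

definition mass :: "nat \<Rightarrow> real" where
  "mass n = (\<Sum>i = 1..int Nx. rho n i)"

lemma S_second_difference:
  assumes "0 \<le> i" "i \<le> int Nx"
  shows "S n (i + 1) - 2 * S n i + S n (i - 1) = dx\<^sup>2 * (nu n i - rho n i)"
  using S_eq[rule_format, of i n] assms dx_pos by (simp add: field_simps)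

lemma dS_centered:
  assumes "0 \<le> j" "j \<le> int Nx"
  shows "dS n j = (S n (j + 1) - S n (j - 1)) / (2 * dx)"
  using dS_def[rule_format, of "j - 1" n] assms by (simp add: add.commute)

lemma J_centered:
  assumes i: "0 \<le> i" "i \<le> int Nx - 1"
  shows "J n i = ah n i * (rho n i + rho n (i + 1)) / 2"
proof -
  have "dS n (i + 1) - dS n i
      = ((S n (i + 1 + 1) - 2 * S n (i + 1) + S n (i + 1 - 1))
         + (S n (i + 1) - 2 * S n i + S n (i - 1))) / (2 * dx)"
    using dS_centered[of i n] dS_centered[of "i + 1" n] i dx_pos by (simp add: field_simps)
  also have "\<dots> = dx * (nu n (i + 1) - rho n (i + 1) + nu n i - rho n i) / 2"
    using S_second_difference[of i n] S_second_difference[of "i + 1" n] i dx_pos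
    by (simp add: field_simps power2_eq_square)
  finally have dS_diff: "dS n (i + 1) - dS n i = dx * (nu n (i + 1) - rho n (i + 1) + nu n i - rho n i) / 2" .
  have A_diff: "A (dS n (i + 1)) - A (dS n i) = ah n i * (dS n (i + 1) - dS n i)"
    using ah_def i by auto
  have "J n i = - (A (dS n (i + 1)) - A (dS n i)) / dx + ah n i * (nu n (i + 1) + nu n i) / 2"
    using J_def i by blast
  also have "\<dots> = - (ah n i * (nu n (i + 1) - rho n (i + 1) + nu n i - rho n i)) / 2
                    + ah n i * (nu n (i + 1) + nu n i) / 2"
    unfolding A_diff dS_diff using dx_pos by simp
  also have "\<dots> = ah n i * (rho n i + rho n (i + 1)) / 2"
    by (simp add: field_simps)
  finally show ?thesis .
qed

lemma abs_dS_le: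
  assumes "0 \<le> j" "j \<le> int Nx"
  shows "\<bar>dS n j\<bar> \<le> dx * (\<Sum>i = 0..int Nx. \<bar>rho n i - nu n i\<bar>)"
proof -
  define B where "B = (\<Sum>i = 0..int Nx. \<bar>S n (i + 1) - 2 * S n i + S n (i - 1)\<bar>)"
  have "\<bar>S n (k + 1) - S n k\<bar> \<le> B" if "- 1 \<le> k" "k \<le> int Nx" for k
    unfolding B_def using S_bd that by (intro abs_first_difference_le_sum_second_differences) auto
  from this[of j] this[of "j - 1"] assms
  have "\<bar>dS n j\<bar> \<le> B / dx"
    using dx_pos by (simp add: dS_centered field_simps abs_divide)
  also have "B = dx\<^sup>2 * (\<Sum>i = 0..int Nx. \<bar>rho n i - nu n i\<bar>)"
    unfolding B_def sum_distrib_left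
    by (intro sum.cong refl) (simp add: S_second_difference abs_mult abs_minus_commute)
  finally show ?thesis
    using dx_pos by (simp add: power2_eq_square)
qed

lemma abs_ah_le:
  assumes A: "\<And>z. (A has_real_derivative a z) (at z)"
    and a: "\<And>z. \<bar>z\<bar> \<le> R \<Longrightarrow> \<bar>a z\<bar> \<le> c"
    and dS: "\<And>j. 0 \<le> j \<Longrightarrow> j \<le> int Nx \<Longrightarrow> \<bar>dS n j\<bar> \<le> R"
    and i: "0 \<le> i" "i \<le> int Nx - 1"
  shows "\<bar>ah n i\<bar> \<le> c"
  using ah_def i c_nonneg abs_difference_quotient_le[OF A a dS[of i] dS[of "i + 1"]] by auto

lemma rho_step_convex_combination:
  assumes i: "0 < i" "i < int Nx"
  shows "rho (Suc n) i = (1 - lam * c - lam * (ah n i - ah n (i - 1)) / 4) * rho n i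
                        + (lam * c / 2 - lam * ah n i / 4) * rho n (i + 1)
                        + (lam * c / 2 + lam * ah n (i - 1) / 4) * rho n (i - 1)"
proof -
  have "J n (i - 1) = ah n (i - 1) * (rho n (i - 1) + rho n i) / 2"
    using J_centered[of "i - 1" n] i by simp
  then show ?thesis
    using rho_step[rule_format, of i n] J_centered[of i n] i by (simp add: field_simps)
qed

lemma rho_step_nonneg:
  assumes rho: "\<And>i. 0 \<le> rho n i"
    and ah: "\<And>i. 0 \<le> i \<Longrightarrow> i \<le> int Nx - 1 \<Longrightarrow> \<bar>ah n i\<bar> \<le> c"
  shows "0 \<le> rho (Suc n) i"
proof (cases "0 < i \<and> i < int Nx")
  case True
  have "\<bar>lam * ah n i\<bar> \<le> lam * c" "\<bar>lam * ah n (i - 1)\<bar> \<le> lam * c"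
    using ah True lam_nonneg by (auto simp: abs_mult intro: mult_left_mono)
  moreover have "3 * (lam * c) \<le> 2"
    using CFL by (simp add: ac_simps)
  moreover have "lam * (ah n i - ah n (i - 1)) = lam * ah n i - lam * ah n (i - 1)"
    by (simp add: right_diff_distrib)
  ultimately have "0 \<le> 1 - lam * c - lam * (ah n i - ah n (i - 1)) / 4"
    "0 \<le> lam * c / 2 - lam * ah n i / 4" "0 \<le> lam * c / 2 + lam * ah n (i - 1) / 4"
    by (auto simp: abs_le_iff)
  with rho show ?thesis
    unfolding rho_step_convex_combination[OF conjunct1[OF True] conjunct2[OF True]]
    by (meson add_nonneg_nonneg mult_nonneg_nonneg)
next
  case False
  then show ?thesis using rho_bd by auto
qed

lemma mass_eq_interior_sum: "mass n = (\<Sum>i = 1..int Nx - 1. rho n i)"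
  unfolding mass_def
proof (cases "Nx = 0")
  case False
  then have "{1..int Nx} = insert (int Nx) {1..int Nx - 1}"
    by auto
  then show "(\<Sum>i = 1..int Nx. rho n i) = (\<Sum>i = 1..int Nx - 1. rho n i)"
    using rho_bd by simp
qed simp

lemma mass_step_le:
  assumes rho: "\<And>i. 0 \<le> rho n i"
    and ah: "\<And>i. 0 \<le> i \<Longrightarrow> i \<le> int Nx - 1 \<Longrightarrow> \<bar>ah n i\<bar> \<le> c"
  shows "mass (Suc n) \<le> mass n"
proof (cases "Nx = 0")
  case False
  define F where "F i = lam / 2 * J n i - lam / 2 * c * (rho n (i + 1) - rho n i)" for i
  have "mass (Suc n) = (\<Sum>i = 1..int Nx - 1. rho n i - (F i - F (i - 1)))"
    unfolding mass_eq_interior_sum using rho_step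
    by (intro sum.cong refl) (simp add: F_def algebra_simps)
  also have "\<dots> = mass n - (\<Sum>i = 1..int Nx - 1. F i - F (i - 1))"
    unfolding mass_eq_interior_sum by (rule sum_subtractf)
  also have "\<dots> = mass n - (F (int Nx - 1) - F 0)"
    using sum_int_telescope[of 1 "int Nx - 1" F] False by simp
  finally have mass_Suc: "mass (Suc n) = mass n - (F (int Nx - 1) - F 0)" .
  have F_last: "F (int Nx - 1) = lam * rho n (int Nx - 1) * (c / 2 + ah n (int Nx - 1) / 4)"
    using J_centered[of "int Nx - 1" n] rho_bd False by (simp add: F_def algebra_simps)
  have F_first: "F 0 = - (lam * rho n 1 * (c / 2 - ah n 0 / 4))"
    using J_centered[of 0 n] rho_bd False by (simp add: F_def algebra_simps)
  have "\<bar>ah n (int Nx - 1)\<bar> \<le> c" "\<bar>ah n 0\<bar> \<le> c"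
    using ah False by auto
  then have "0 \<le> F (int Nx - 1)" "F 0 \<le> 0"
    unfolding F_last F_first using lam_nonneg rho
    by (auto intro!: mult_nonneg_nonneg simp: abs_le_iff)
  then show ?thesis
    using mass_Suc by simp
qed (unfold mass_def, simp)

lemma abs_ah_le_mass:
  fixes w a :: "real \<Rightarrow> real"
  assumes A: "\<And>z. (A has_real_derivative a z) (at z)"
    and a: "\<And>z. \<bar>z\<bar> \<le> (1 + (LINT x|lborel. \<bar>w x\<bar>)) * (dx * mass n) \<Longrightarrow> \<bar>a z\<bar> \<le> c"
    and w: "integrable lborel w"
    and nu: "\<And>i. nu n i = (\<Sum>k = 1..int Nx. rho n k * wgt w dx k i)"
    and rho: "\<And>i. 0 \<le> rho n i"
    and i: "0 \<le> i" "i \<le> int Nx - 1"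
  shows "\<bar>ah n i\<bar> \<le> c"
proof (rule abs_ah_le[OF A a _ i])
  fix j assume "0 \<le> j" "j \<le> int Nx"
  then have "\<bar>dS n j\<bar> \<le> dx * (\<Sum>i = 0..int Nx. \<bar>rho n i - nu n i\<bar>)"
    by (rule abs_dS_le)
  also have "\<dots> \<le> dx * ((1 + (LINT x|lborel. \<bar>w x\<bar>)) * mass n)"
    unfolding mass_def using rho rho_bd nu dx_pos
    by (intro mult_left_mono sum_abs_diff_discrete_convolution_le[OF w dx_pos]) auto
  finally show "\<bar>dS n j\<bar> \<le> (1 + (LINT x|lborel. \<bar>w x\<bar>)) * (dx * mass n)"
    by (simp add: ac_simps)
qed

lemma nonneg_and_mass_le:
  assumes init: "\<And>i. 0 \<le> rho 0 i" "dx * mass 0 \<le> M"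
    and ah: "\<And>n i. (\<And>i. 0 \<le> rho n i) \<Longrightarrow> dx * mass n \<le> M \<Longrightarrow> 0 \<le> i \<Longrightarrow> i \<le> int Nx - 1
               \<Longrightarrow> \<bar>ah n i\<bar> \<le> c"
  shows "(\<forall>i. 0 \<le> rho n i) \<and> dx * mass n \<le> M"
proof (induction n)
  case (Suc n)
  then have rho: "\<And>i. 0 \<le> rho n i" and ah_n: "\<And>i. 0 \<le> i \<Longrightarrow> i \<le> int Nx - 1 \<Longrightarrow> \<bar>ah n i\<bar> \<le> c"
    using ah by auto
  have "dx * mass (Suc n) \<le> dx * mass n"
    using mass_step_le[OF rho ah_n] dx_pos by simp
  then show ?case
    using Suc rho_step_nonneg[OF rho ah_n] by auto
qed (use init in auto)

end

theorem lemma2p3: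
  fixes W w a A :: "real \<Rightarrow> real"
    and w0 \<alpha> M c :: real
    and mu :: "real measure"
    and Nx :: nat and x0 dx dt lam :: real
    and rho nu S dS ah J :: "nat \<Rightarrow> int \<Rightarrow> real"
  assumes W_C1: "\<forall>x. x \<noteq> 0 \<longrightarrow> W differentiable (at x)"
    and W_C1': "continuous_on (UNIV - {0}) (deriv W)"
    and W_eq: "weak_second_deriv_dirac W w"
    and w_cont: "continuous_on UNIV w"
    and w_bdd: "bounded (range w)"
    and w_int: "integrable lborel w"
    and w0_def: "w0 = (LINT x|lborel. \<bar>w x\<bar>)"
    and a_deriv: "\<forall>x. a differentiable (at x)"
    and a_C1: "continuous_on UNIV (deriv a)"
    and a_mono: "\<forall>x. 0 \<le> deriv a x \<and> deriv a x \<le> \<alpha>"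
    and A_prim: "\<forall>x. (A has_real_derivative a x) (at x)"
    and A0: "A 0 = 0"
    and mu_borel: "sets mu = sets borel"
    and mu_fin: "finite_measure mu"
    and mu_P1: "(\<integral>\<^sup>+ x. ennreal \<bar>x\<bar> \<partial>mu) < \<infinity>"
    and mu_cpt: "\<exists>K. compact K \<and> emeasure mu (UNIV - K) = 0"
    and M_def: "M = measure mu UNIV"
    and c_def: "c = (SUP x\<in>{- M * (1 + w0) .. M * (1 + w0)}. \<bar>a x\<bar>)"
    and dx_pos: "0 < dx"
    and dt_pos: "0 < dt"
    and supp: "emeasure mu (UNIV - {grid x0 dx 0 .. grid x0 dx (int Nx)}) = 0"
    and lam_def: "lam = dt / dx"
    and CFL: "3 * c * lam \<le> 2"
    \<comment> \<open>rho n i = rho_i^n; conventions rho_0 = rho_Nx = 0 (and 0 outside the grid)\<close>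
    and rho_bd: "\<forall>n i. (i \<le> 0 \<or> int Nx \<le> i) \<longrightarrow> rho n i = 0"
    and rho_init: "\<forall>i. 0 < i \<and> i < int Nx \<longrightarrow>
                     rho 0 i = measure mu {grid x0 dx i ..< grid x0 dx (i + 1)} / dx"
    and nu_def: "\<forall>n i. nu n i = (\<Sum>k = 1 .. int Nx. rho n k * wgt w dx k i)"
    \<comment> \<open>S: conventions S_0 = S_1 = 0, discrete Poisson equation at the nodes 0..Nx\<close>
    and S_bd: "\<forall>n. S n 0 = 0 \<and> S n 1 = 0"
    and S_eq: "\<forall>n i. 0 \<le> i \<and> i \<le> int Nx \<longrightarrow>
                 - (S n (i + 1) - 2 * S n i + S n (i - 1)) / dx\<^sup>2 + nu n i = rho n i"
    \<comment> \<open>dS n i = (partial_x S)_i^n for i = 0..Nx\<close>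
    and dS_def: "\<forall>n i. - 1 \<le> i \<and> i \<le> int Nx - 1 \<longrightarrow>
                   dS n (i + 1) = (S n (i + 2) - S n i) / (2 * dx)"
    \<comment> \<open>ah n i = a_{i+1/2}^n and J n i = J_{i+1/2}^n for i = 0..Nx-1\<close>
    and ah_def: "\<forall>n i. 0 \<le> i \<and> i \<le> int Nx - 1 \<longrightarrow>
                   ah n i = (if dS n (i + 1) = dS n i then 0
                             else (A (dS n (i + 1)) - A (dS n i)) / (dS n (i + 1) - dS n i))"
    and J_def: "\<forall>n i. 0 \<le> i \<and> i \<le> int Nx - 1 \<longrightarrow>
                  J n i = - (A (dS n (i + 1)) - A (dS n i)) / dx
                          + ah n i * (nu n (i + 1) + nu n i) / 2"
    and J_bd: "\<forall>n. J n (- 1) = 0 \<and> J n (int Nx) = 0"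
    and rho_step: "\<forall>n i. 0 < i \<and> i < int Nx \<longrightarrow>
                     rho (Suc n) i = rho n i - lam / 2 * (J n i - J n (i - 1))
                                     + lam / 2 * c * (rho n (i + 1) - 2 * rho n i + rho n (i - 1))"
  shows "(\<forall>n i. 0 \<le> rho n i) \<and> (\<forall>n i. 0 \<le> i \<and> i \<le> int Nx - 1 \<longrightarrow> \<bar>ah n i\<bar> \<le> c)"
proof -
  define R where "R = M * (1 + w0)"
  have w0_nonneg: "0 \<le> w0"
    unfolding w0_def by (rule integral_nonneg_AE) simp
  have a_cont: "continuous_on {-R..R} a"
    using a_deriv by (metis continuous_at_imp_continuous_on differentiable_imp_continuous_within)
  have c_R: "c = (SUP z\<in>{-R..R}. \<bar>a z\<bar>)"
    using c_def by (simp add: R_def)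
  have a_le_c: "\<bar>a z\<bar> \<le> c" if "\<bar>z\<bar> \<le> R" for z
    unfolding c_R using that by (intro abs_le_SUP_abs[OF a_cont]) auto
  have "0 \<le> c" "0 \<le> lam"
    using a_le_c[of 0] M_def w0_nonneg lam_def dx_pos dt_pos by (auto simp: R_def)
  then interpret scheme: aggregation_LF_scheme Nx dx lam c A rho nu S dS ah J
    using dx_pos CFL rho_bd S_bd S_eq dS_def ah_def J_def rho_step by unfold_locales
  have ah_le: "\<bar>ah n i\<bar> \<le> c"
    if "\<And>i. 0 \<le> rho n i" "dx * scheme.mass n \<le> M" "0 \<le> i" "i \<le> int Nx - 1" for n i
    using that w0_nonneg nu_def
    by (intro scheme.abs_ah_le_mass[OF A_prim[rule_format] a_le_c w_int])
      (auto simp: R_def w0_def[symmetric] mult.commute intro: order.trans mult_right_mono)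
  have "dx * scheme.mass 0 \<le> M"
    using grid_average_mass_le[OF mu_fin mu_borel dx_pos, of Nx "rho 0" x0] rho_init rho_bd
      M_def sets_eq_imp_space_eq[OF mu_borel] by (simp add: scheme.mass_def)
  moreover have "0 \<le> rho 0 i" for i
    using rho_init rho_bd dx_pos by (cases "0 < i \<and> i < int Nx") auto
  ultimately have "(\<forall>i. 0 \<le> rho n i) \<and> dx * scheme.mass n \<le> M" for n
    using ah_le by (intro scheme.nonneg_and_mass_le) auto
  then show ?thesis
    using ah_le by blast
qed

end
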